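(* $\mathrm{TC}(\mathbb{S}^1_3)=3$.
   Context: Finite spaces are finite $T_0$ spaces identified with finite posets ($x^\downarrow=\{y:y\le x\}$ is the minimal open neighborhood of $x$; open sets are the down-closed sets). $\mathbb{S}^1_3=\{x_0,x_1,x_2,y_0,y_1,y_2\}$ has minimal open sets $x_i^\downarrow=\{x_i\}$ and $y_i^\downarrow=\{y_i,x_i,x_{i-1\bmod 3}\}$. Topological complexity is unreduced: for path-connected $X$, with $\pi:X^I\to X\times X$, $\gamma\mapsto(\gamma(0),\gamma(1))$ ($X^I$ with compact-open topology), $\mathrm{TC}(X)$ is the minimal $k$ such that $X\times X$ is covered by $k$ open sets each admitting a continuous section of $\pi$. *)

theory Defs
  imports "HOL-Analysis.Analysis"
begin

definition compact_open :: "'a topology \<Rightarrow> 'b topology \<Rightarrow> ('a \<Rightarrow> 'b) topology" where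
  "compact_open X Y =
     subtopology
       (topology_generated_by {{f. f ` K \<subseteq> V} | K V. compactin X K \<and> openin Y V})
       {f. continuous_map X Y f \<and> f \<in> extensional (topspace X)}"

abbreviation unit_interval :: "real topology" where
  "unit_interval \<equiv> top_of_set {0..1}"

definition path_space :: "'a topology \<Rightarrow> (real \<Rightarrow> 'a) topology" where
  "path_space X = compact_open unit_interval X"

definition has_motion_planner :: "'a topology \<Rightarrow> ('a \<times> 'a) set \<Rightarrow> bool" where
  "has_motion_planner X U \<longleftrightarrow>
     (\<exists>s. continuous_map (subtopology (prod_topology X X) U) (path_space X) s \<and>
          (\<forall>p\<in>U. s p 0 = fst p \<and> s p 1 = snd p))"

text \<open>(Unreduced) topological complexity: the least k such that X \<times> X is covered by
  k open sets each admitting a continuous section of \<pi>.\<close>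
definition TC :: "'a topology \<Rightarrow> nat" where
  "TC X = (LEAST k. \<exists>U :: nat \<Rightarrow> ('a \<times> 'a) set.
              (\<forall>i<k. openin (prod_topology X X) (U i) \<and> has_motion_planner X (U i)) \<and>
              (\<Union>i<k. U i) = topspace (prod_topology X X))"

datatype S13 = x0 | x1 | x2 | y0 | y1 | y2

fun minimal_open :: "S13 \<Rightarrow> S13 set" where
  "minimal_open x0 = {x0}"
| "minimal_open x1 = {x1}"
| "minimal_open x2 = {x2}"
| "minimal_open y0 = {y0, x0, x2}"
| "minimal_open y1 = {y1, x1, x0}"
| "minimal_open y2 = {y2, x2, x1}"

definition S1_3 :: "S13 topology" where
  "S1_3 = topology (\<lambda>U. \<forall>p\<in>U. minimal_open p \<subseteq> U)"

end

theory Submission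
  imports Defs
begin

text \<open>
  The integers, ordered so that each odd number lies above its two neighbours, cover the
  finite circle via the hexagon x0 y1 x1 y2 x2 y0. For the upper bound, the square is covered
  by the minimal neighbourhoods of the pairs (yi, yj) with i = j, i < j and i > j. On the first
  set a path waits at a common upper bound of its endpoints; on the other two it walks along
  the line between lifts of its endpoints that depend monotonically on them.

  For the lower bound, a motion planner on an open set is monotone for the specialisation
  order, so the winding numbers W of its paths, read off from fine samples, satisfy
  W q - W p = (displacement of the endpoints) whenever p lies below q. Around a triangle of
  maximal pairs, joined through their common lower bounds, these increments must cancel.
  For seven explicit triangles they do not, and every 2-colouring of the nine maximal pairs
  makes one of these triangles monochromatic.
\<close>

instance S13 :: finite
proof
  have "(UNIV :: S13 set) = {x0, x1, x2, y0, y1, y2}"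
    using S13.exhaust by auto
  then show "finite (UNIV :: S13 set)"
    by (metis finite.emptyI finite_insert)
qed

lemma openin_S1_3: "openin S1_3 U \<longleftrightarrow> (\<forall>p\<in>U. minimal_open p \<subseteq> U)"
proof -
  have "istopology (\<lambda>U. \<forall>p\<in>U. minimal_open p \<subseteq> U)"
    unfolding istopology_def by blast
  then show ?thesis
    unfolding S1_3_def by (simp add: topology_inverse')
qed

lemma topspace_S1_3 [simp]: "topspace S1_3 = UNIV"
  unfolding topspace_def openin_S1_3 by auto

lemma minimal_open_refl [simp]: "p \<in> minimal_open p"
  by (cases p) auto

lemma minimal_open_trans: "a \<in> minimal_open b \<Longrightarrow> b \<in> minimal_open c \<Longrightarrow> a \<in> minimal_open c"
  by (cases a; cases b; cases c) auto

lemma openin_minimal_open: "openin S1_3 (minimal_open p)"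
  unfolding openin_S1_3 using minimal_open_trans by blast

definition minimal_open_pair :: "S13 \<times> S13 \<Rightarrow> (S13 \<times> S13) set" where
  "minimal_open_pair q = minimal_open (fst q) \<times> minimal_open (snd q)"

lemma minimal_open_pair_trans:
  "p \<in> minimal_open_pair q \<Longrightarrow> q \<in> minimal_open_pair r \<Longrightarrow> p \<in> minimal_open_pair r"
  unfolding minimal_open_pair_def by (auto intro: minimal_open_trans)

lemma openin_prod_S1_3:
  "openin (prod_topology S1_3 S1_3) V \<longleftrightarrow> (\<forall>q\<in>V. minimal_open_pair q \<subseteq> V)"
proof
  assume V: "openin (prod_topology S1_3 S1_3) V"
  show "\<forall>q\<in>V. minimal_open_pair q \<subseteq> V"
  proof
    fix q assume "q \<in> V"
    then obtain A B where "openin S1_3 A" "openin S1_3 B" "fst q \<in> A" "snd q \<in> B" "A \<times> B \<subseteq> V"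
      using V unfolding openin_prod_topology_alt by (metis prod.collapse)
    then show "minimal_open_pair q \<subseteq> V"
      unfolding minimal_open_pair_def openin_S1_3 by blast
  qed
next
  assume "\<forall>q\<in>V. minimal_open_pair q \<subseteq> V"
  then show "openin (prod_topology S1_3 S1_3) V"
    unfolding openin_prod_topology_alt minimal_open_pair_def
    by (metis fst_conv snd_conv minimal_open_refl openin_minimal_open)
qed

lemma openin_UN_minimal_open_pair:
  "openin (prod_topology S1_3 S1_3) (\<Union>q\<in>Q. minimal_open_pair q)"
  unfolding openin_prod_S1_3 using minimal_open_pair_trans by blast

section \<open>Paths and the compact-open topology\<close>

lemma topspace_compact_open:
  "topspace (compact_open X Y) = {f. continuous_map X Y f \<and> f \<in> extensional (topspace X)}"
proof -
  have "UNIV \<in> {{f. f ` K \<subseteq> V} | K V. compactin X K \<and> openin Y V}"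
    by (intro CollectI exI[of _ "{}"]) auto
  then show ?thesis
    unfolding compact_open_def by (auto simp: Union_maximal_sets)
qed

lemma openin_compact_open_subbasic:
  assumes "compactin X K" "openin Y V"
  shows "openin (compact_open X Y) {f \<in> topspace (compact_open X Y). f ` K \<subseteq> V}"
proof -
  have "{f. f ` K \<subseteq> V} \<in> {{f. f ` K \<subseteq> V} | K V. compactin X K \<and> openin Y V}"
    using assms by blast
  then have "openin (topology_generated_by {{f. f ` K \<subseteq> V} | K V. compactin X K \<and> openin Y V})
      {f. f ` K \<subseteq> V}"
    unfolding openin_topology_generated_by_iff by (rule generate_topology_on.Basis)
  moreover have "{f \<in> topspace (compact_open X Y). f ` K \<subseteq> V} =
      {f. f ` K \<subseteq> V} \<inter> {f. continuous_map X Y f \<and> f \<in> extensional (topspace X)}"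
    by (auto simp: topspace_compact_open)
  ultimately show ?thesis
    unfolding compact_open_def openin_subtopology by auto
qed

lemma topspace_path_space:
  "topspace (path_space X) = {\<gamma>. continuous_map unit_interval X \<gamma> \<and> \<gamma> \<in> extensional {0..1}}"
  by (simp add: path_space_def topspace_compact_open)

lemma openin_path_space_eval:
  assumes "t \<in> {0..1}" "openin X V"
  shows "openin (path_space X) {\<gamma> \<in> topspace (path_space X). \<gamma> t \<in> V}"
  using openin_compact_open_subbasic[of unit_interval "{t}" X V] assms
  by (simp add: path_space_def)

lemma continuous_map_into_S1_3_iff:
  "continuous_map unit_interval S1_3 \<gamma> \<longleftrightarrow>
     (\<forall>t\<in>{0..1}. \<exists>e>0. \<forall>u\<in>{0..1}. \<bar>u - t\<bar> < e \<longrightarrow> \<gamma> u \<in> minimal_open (\<gamma> t))"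
    (is "_ \<longleftrightarrow> (\<forall>t\<in>{0..1}. ?near t)")
proof
  assume \<gamma>: "continuous_map unit_interval S1_3 \<gamma>"
  show "\<forall>t\<in>{0..1}. ?near t"
  proof
    fix t :: real assume "t \<in> {0..1}"
    moreover have "openin unit_interval {u \<in> {0..1}. \<gamma> u \<in> minimal_open (\<gamma> t)}"
      using \<gamma> openin_minimal_open unfolding continuous_map_def by auto
    ultimately show "?near t"
      unfolding openin_euclidean_subtopology_iff by (auto simp: dist_real_def)
  qed
next
  assume near: "\<forall>t\<in>{0..1}. ?near t"
  show "continuous_map unit_interval S1_3 \<gamma>"
    unfolding continuous_map_def
  proof (intro conjI allI impI)
    fix V assume V: "openin S1_3 V"
    show "openin unit_interval {t \<in> topspace unit_interval. \<gamma> t \<in> V}"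
      unfolding openin_euclidean_subtopology_iff
    proof (intro conjI ballI)
      fix t assume t: "t \<in> {t \<in> topspace unit_interval. \<gamma> t \<in> V}"
      then have "t \<in> {0..1}" by simp
      then obtain e where "e > 0" "\<forall>u\<in>{0..1}. \<bar>u - t\<bar> < e \<longrightarrow> \<gamma> u \<in> minimal_open (\<gamma> t)"
        using near by blast
      moreover have "minimal_open (\<gamma> t) \<subseteq> V"
        using V t unfolding openin_S1_3 by auto
      ultimately show "\<exists>e>0. \<forall>u\<in>{0..1}. dist u t < e \<longrightarrow>
          u \<in> {t \<in> topspace unit_interval. \<gamma> t \<in> V}"
        by (auto simp: dist_real_def)
    qed auto
  qed auto
qed

lemma openin_path_space_S1_3_below:
  assumes A: "openin (path_space S1_3) A" and "\<delta> \<in> A" and "\<gamma> \<in> topspace (path_space S1_3)"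
    and "\<forall>t\<in>{0..1}. \<gamma> t \<in> minimal_open (\<delta> t)"
  shows "\<gamma> \<in> A"
proof -
  have below_closed: "\<gamma> \<in> G"
    if "generate_topology_on
          {{f. f ` K \<subseteq> V} | K V. compactin unit_interval K \<and> openin S1_3 V} G"
      and "\<delta> \<in> G" and "\<forall>t\<in>{0..1}. \<gamma> t \<in> minimal_open (\<delta> t)" for G \<gamma> \<delta>
    using that
  proof (induction arbitrary: \<gamma> \<delta> rule: generate_topology_on.induct)
    case (Basis s)
    then obtain K V where s: "s = {f. f ` K \<subseteq> V}" "compactin unit_interval K" "openin S1_3 V"
      by blast
    have "K \<subseteq> {0..1}"
      using compactin_subset_topspace[OF s(2)] by simp
    then show ?case
      using Basis.prems s(3) unfolding s(1) openin_S1_3 by blast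
  qed blast+
  obtain G where "openin (topology_generated_by
        {{f. f ` K \<subseteq> V} | K V. compactin unit_interval K \<and> openin S1_3 V}) G"
      and "A = G \<inter> {f. continuous_map unit_interval S1_3 f \<and> f \<in> extensional {0..1}}"
    using A unfolding path_space_def compact_open_def openin_subtopology by auto
  then show ?thesis
    using below_closed assms(2-4) topspace_path_space
    unfolding openin_topology_generated_by_iff by blast
qed

section \<open>Motion planners as monotone families of paths\<close>

lemma has_motion_planner_S1_3I:
  fixes P :: "S13 \<times> S13 \<Rightarrow> real \<Rightarrow> S13"
  assumes V: "openin (prod_topology S1_3 S1_3) V"
    and paths: "\<And>p. p \<in> V \<Longrightarrow> continuous_map unit_interval S1_3 (P p)"
    and mono: "\<And>p q t. \<lbrakk>p \<in> V; q \<in> V; p \<in> minimal_open_pair q; t \<in> {0..1}\<rbrakk>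
                 \<Longrightarrow> P p t \<in> minimal_open (P q t)"
    and ends: "\<And>p. p \<in> V \<Longrightarrow> P p 0 = fst p \<and> P p 1 = snd p"
  shows "has_motion_planner S1_3 V"
proof -
  define s where "s p = restrict (P p) {0..1}" for p
  have s_path: "s p \<in> topspace (path_space S1_3)" if "p \<in> V" for p
    using continuous_map_eq[OF paths[OF that], of "s p"]
    by (simp add: s_def topspace_path_space)
  have "continuous_map (subtopology (prod_topology S1_3 S1_3) V) (path_space S1_3) s"
    unfolding continuous_map_def
  proof (intro conjI allI impI)
    fix A assume A: "openin (path_space S1_3) A"
    have "openin (prod_topology S1_3 S1_3) {p \<in> V. s p \<in> A}"
      unfolding openin_prod_S1_3
    proof (intro ballI subsetI)
      fix q p assume q: "q \<in> {p \<in> V. s p \<in> A}" and p: "p \<in> minimal_open_pair q"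
      then have "p \<in> V"
        using V unfolding openin_prod_S1_3 by blast
      moreover have "s p \<in> A"
      proof (rule openin_path_space_S1_3_below[OF A])
        show "s q \<in> A" "s p \<in> topspace (path_space S1_3)"
          using q s_path[OF \<open>p \<in> V\<close>] by auto
        show "\<forall>t\<in>{0..1}. s p t \<in> minimal_open (s q t)"
          using mono[OF \<open>p \<in> V\<close> _ p] q by (simp add: s_def)
      qed
      ultimately show "p \<in> {p \<in> V. s p \<in> A}" by blast
    qed
    then show "openin (subtopology (prod_topology S1_3 S1_3) V)
        {p \<in> topspace (subtopology (prod_topology S1_3 S1_3) V). s p \<in> A}"
      unfolding openin_subtopology by auto
  qed (use s_path in auto)
  then show ?thesis
    unfolding has_motion_planner_def using ends by (intro exI[of _ s]) (auto simp: s_def)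
qed

lemma motion_planner_S1_3_monotone:
  assumes s: "continuous_map (subtopology (prod_topology S1_3 S1_3) V) (path_space S1_3) s"
    and "p \<in> V" "q \<in> V" "p \<in> minimal_open_pair q" "t \<in> {0..1}"
  shows "s p t \<in> minimal_open (s q t)"
proof -
  let ?A = "{\<gamma> \<in> topspace (path_space S1_3). \<gamma> t \<in> minimal_open (s q t)}"
  have "openin (path_space S1_3) ?A"
    using openin_path_space_eval[OF \<open>t \<in> {0..1}\<close> openin_minimal_open] .
  moreover have "\<forall>A. openin (path_space S1_3) A \<longrightarrow>
      openin (subtopology (prod_topology S1_3 S1_3) V) {p \<in> V. s p \<in> A}"
    using s unfolding continuous_map_def by simp
  ultimately have "openin (subtopology (prod_topology S1_3 S1_3) V) {p \<in> V. s p \<in> ?A}"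
    by blast
  then obtain U where U: "openin (prod_topology S1_3 S1_3) U" "{p \<in> V. s p \<in> ?A} = U \<inter> V"
    unfolding openin_subtopology by blast
  have "s q \<in> topspace (path_space S1_3)"
    using s \<open>q \<in> V\<close> unfolding continuous_map_def by auto
  then have "q \<in> {p \<in> V. s p \<in> ?A}"
    using \<open>q \<in> V\<close> by simp
  then have "q \<in> U"
    using U(2) by blast
  then have "p \<in> U"
    using U(1) \<open>p \<in> minimal_open_pair q\<close> unfolding openin_prod_S1_3 by blast
  then have "p \<in> {p \<in> V. s p \<in> ?A}"
    using U(2) \<open>p \<in> V\<close> by blast
  then show ?thesis
    by simp
qed

section \<open>Three motion planners covering the square\<close>

text \<open>The integers as a finite-space line, odd numbers being maximal; \<open>line_to_circle\<close>,
  of period 6, is the covering map onto the finite circle.\<close>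

definition line_below :: "int \<Rightarrow> int \<Rightarrow> bool" where
  "line_below n m \<longleftrightarrow> n = m \<or> (odd m \<and> \<bar>n - m\<bar> = 1)"

definition line_to_circle :: "int \<Rightarrow> S13" where
  "line_to_circle n = [x0, y1, x1, y2, x2, y0] ! nat (n mod 6)"

lemma line_to_circle_mono:
  assumes "line_below n m"
  shows "line_to_circle n \<in> minimal_open (line_to_circle m)"
proof (cases "n = m")
  case False
  then have "odd m" "n = m + 1 \<or> n = m - 1"
    using assms unfolding line_below_def by auto
  then have "m mod 6 = 1 \<or> m mod 6 = 3 \<or> m mod 6 = 5"
      "n mod 6 = (m mod 6 + 1) mod 6 \<or> n mod 6 = (m mod 6 - 1) mod 6"
    by (presburger, auto simp: mod_add_left_eq mod_diff_left_eq)
  then show ?thesis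
    unfolding line_to_circle_def by auto
qed simp

definition line_clamp :: "int \<Rightarrow> int \<Rightarrow> int \<Rightarrow> int" where
  "line_clamp lo hi n = max lo (min n hi)"

lemma line_clamp_mono:
  "line_below n m \<Longrightarrow> line_below (line_clamp lo hi n) (line_clamp lo hi m)"
  "line_below lo lo' \<Longrightarrow> line_below hi hi' \<Longrightarrow> line_below (line_clamp lo hi n) (line_clamp lo' hi' n)"
  unfolding line_below_def line_clamp_def by (auto simp: max_def min_def; presburger)+

lemma has_motion_planner_S1_3_clamped_walk:
  fixes lo hi :: "S13 \<times> S13 \<Rightarrow> int" and \<sigma> :: "real \<Rightarrow> int"
  assumes V: "openin (prod_topology S1_3 S1_3) V"
    and \<sigma>: "\<And>t. \<exists>e>0. \<forall>u. \<bar>u - t\<bar> < e \<longrightarrow> line_below (\<sigma> u) (\<sigma> t)"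
    and mono: "\<And>p q. \<lbrakk>p \<in> V; q \<in> V; p \<in> minimal_open_pair q\<rbrakk>
                 \<Longrightarrow> line_below (lo p) (lo q) \<and> line_below (hi p) (hi q)"
    and ends: "\<And>p. p \<in> V \<Longrightarrow> line_to_circle (line_clamp (lo p) (hi p) (\<sigma> 0)) = fst p \<and>
                              line_to_circle (line_clamp (lo p) (hi p) (\<sigma> 1)) = snd p"
  shows "has_motion_planner S1_3 V"
proof (rule has_motion_planner_S1_3I[OF V])
  fix p
  show "continuous_map unit_interval S1_3 (\<lambda>t. line_to_circle (line_clamp (lo p) (hi p) (\<sigma> t)))"
    unfolding continuous_map_into_S1_3_iff
    by (meson \<sigma> line_clamp_mono(1) line_to_circle_mono)
next
  fix p q t
  assume "p \<in> V" "q \<in> V" "p \<in> minimal_open_pair q"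
  then show "line_to_circle (line_clamp (lo p) (hi p) (\<sigma> t)) \<in>
      minimal_open (line_to_circle (line_clamp (lo q) (hi q) (\<sigma> t)))"
    using mono by (blast intro: line_to_circle_mono line_clamp_mono(2))
qed (use ends in blast)

text \<open>Clamped to \<open>[lo, hi]\<close> with \<open>-2 \<le> lo \<le> hi \<le> 4\<close>, the walk becomes a path from \<open>lo\<close> to
  \<open>hi\<close> that depends monotonically on \<open>lo\<close> and \<open>hi\<close>.\<close>

definition walk :: "real \<Rightarrow> int" where
  "walk t = (if t < 1/4 then -2 else if t = 1/4 then -1 else if t < 1/2 then 0 else
             if t = 1/2 then 1 else if t < 3/4 then 2 else if t = 3/4 then 3 else 4)"

lemma walk_locally_below: "\<exists>e>0. \<forall>u. \<bar>u - t\<bar> < e \<longrightarrow> line_below (walk u) (walk t)"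
proof -
  consider "t < 1/4" | "t = 1/4" | "1/4 < t" "t < 1/2" | "t = 1/2" | "1/2 < t" "t < 3/4"
    | "t = 3/4" | "3/4 < t"
    by linarith
  then show ?thesis
  proof cases
    case 1 then show ?thesis by (intro exI[of _ "1/4 - t"]) (auto simp: walk_def line_below_def)
  next
    case 2 then show ?thesis by (intro exI[of _ "1/4"]) (auto simp: walk_def line_below_def)
  next
    case 3 then show ?thesis
      by (intro exI[of _ "min (t - 1/4) (1/2 - t)"]) (auto simp: walk_def line_below_def)
  next
    case 4 then show ?thesis by (intro exI[of _ "1/4"]) (auto simp: walk_def line_below_def)
  next
    case 5 then show ?thesis
      by (intro exI[of _ "min (t - 1/2) (3/4 - t)"]) (auto simp: walk_def line_below_def)
  next
    case 6 then show ?thesis by (intro exI[of _ "1/4"]) (auto simp: walk_def line_below_def)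
  next
    case 7 then show ?thesis by (intro exI[of _ "t - 3/4"]) (auto simp: walk_def line_below_def)
  qed
qed

lemma walk_reversed_locally_below:
  "\<exists>e>0. \<forall>u. \<bar>u - t\<bar> < e \<longrightarrow> line_below (walk (1 - u)) (walk (1 - t))"
proof -
  obtain e where "e > 0" "\<forall>u. \<bar>u - (1 - t)\<bar> < e \<longrightarrow> line_below (walk u) (walk (1 - t))"
    using walk_locally_below by blast
  then show ?thesis
    by (intro exI[of _ e]) auto
qed

lemma walk_0 [simp]: "walk 0 = -2" and walk_1 [simp]: "walk 1 = 4"
  by (auto simp: walk_def)

definition circle_pos :: "S13 \<Rightarrow> int" where
  "circle_pos a = (case a of x0 \<Rightarrow> 0 | y1 \<Rightarrow> 1 | x1 \<Rightarrow> 2 | y2 \<Rightarrow> 3 | x2 \<Rightarrow> 4 | y0 \<Rightarrow> 5)"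

definition circle_pos_low :: "S13 \<Rightarrow> int" where
  "circle_pos_low a = (case a of x2 \<Rightarrow> -2 | y0 \<Rightarrow> -1 | x0 \<Rightarrow> 0 | y1 \<Rightarrow> 1 | x1 \<Rightarrow> 2 | y2 \<Rightarrow> 3)"

lemma circle_pos_mono:
  "a \<in> minimal_open b \<Longrightarrow> b \<in> minimal_open y1 \<union> minimal_open y2 \<Longrightarrow>
     line_below (circle_pos a) (circle_pos b)"
  by (cases a; cases b) (auto simp: circle_pos_def line_below_def)

lemma circle_pos_low_mono:
  "a \<in> minimal_open b \<Longrightarrow> b \<in> minimal_open y0 \<union> minimal_open y1 \<Longrightarrow>
     line_below (circle_pos_low a) (circle_pos_low b)"
  by (cases a; cases b) (auto simp: circle_pos_low_def line_below_def)

definition upper_region :: "(S13 \<times> S13) set" where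
  "upper_region = (\<Union>q\<in>{(y0, y1), (y0, y2), (y1, y2)}. minimal_open_pair q)"

definition lower_region :: "(S13 \<times> S13) set" where
  "lower_region = (\<Union>q\<in>{(y1, y0), (y2, y0), (y2, y1)}. minimal_open_pair q)"

definition diagonal_region :: "(S13 \<times> S13) set" where
  "diagonal_region = (\<Union>q\<in>{(y0, y0), (y1, y1), (y2, y2)}. minimal_open_pair q)"

lemma openin_regions:
  "openin (prod_topology S1_3 S1_3) diagonal_region"
  "openin (prod_topology S1_3 S1_3) upper_region"
  "openin (prod_topology S1_3 S1_3) lower_region"
  unfolding diagonal_region_def upper_region_def lower_region_def
  by (rule openin_UN_minimal_open_pair)+

lemma has_motion_planner_upper_region: "has_motion_planner S1_3 upper_region"
proof (rule has_motion_planner_S1_3_clamped_walk[OF openin_regions(2), where \<sigma> = walk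
      and lo = "\<lambda>p. circle_pos_low (fst p)" and hi = "\<lambda>p. circle_pos (snd p)"])
  show "\<And>p q. \<lbrakk>p \<in> upper_region; q \<in> upper_region; p \<in> minimal_open_pair q\<rbrakk> \<Longrightarrow>
      line_below (circle_pos_low (fst p)) (circle_pos_low (fst q)) \<and>
      line_below (circle_pos (snd p)) (circle_pos (snd q))"
  proof -
    fix p q assume "q \<in> upper_region" "p \<in> minimal_open_pair q"
    then have "fst p \<in> minimal_open (fst q)" "snd p \<in> minimal_open (snd q)"
      "fst q \<in> minimal_open y0 \<union> minimal_open y1" "snd q \<in> minimal_open y1 \<union> minimal_open y2"
      unfolding upper_region_def minimal_open_pair_def by auto
    then show "line_below (circle_pos_low (fst p)) (circle_pos_low (fst q)) \<and>
        line_below (circle_pos (snd p)) (circle_pos (snd q))"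
      by (simp add: circle_pos_mono circle_pos_low_mono)
  qed
  show "\<And>p. p \<in> upper_region \<Longrightarrow>
      line_to_circle (line_clamp (circle_pos_low (fst p)) (circle_pos (snd p)) (walk 0)) = fst p \<and>
      line_to_circle (line_clamp (circle_pos_low (fst p)) (circle_pos (snd p)) (walk 1)) = snd p"
    unfolding upper_region_def minimal_open_pair_def
    by (auto simp: line_clamp_def circle_pos_def circle_pos_low_def line_to_circle_def)
qed (rule walk_locally_below)

lemma has_motion_planner_lower_region: "has_motion_planner S1_3 lower_region"
proof (rule has_motion_planner_S1_3_clamped_walk[OF openin_regions(3), where \<sigma> = "\<lambda>t. walk (1 - t)"
      and lo = "\<lambda>p. circle_pos_low (snd p)" and hi = "\<lambda>p. circle_pos (fst p)"])
  show "\<And>p q. \<lbrakk>p \<in> lower_region; q \<in> lower_region; p \<in> minimal_open_pair q\<rbrakk> \<Longrightarrow>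
      line_below (circle_pos_low (snd p)) (circle_pos_low (snd q)) \<and>
      line_below (circle_pos (fst p)) (circle_pos (fst q))"
  proof -
    fix p q assume "q \<in> lower_region" "p \<in> minimal_open_pair q"
    then have "snd p \<in> minimal_open (snd q)" "fst p \<in> minimal_open (fst q)"
      "snd q \<in> minimal_open y0 \<union> minimal_open y1" "fst q \<in> minimal_open y1 \<union> minimal_open y2"
      unfolding lower_region_def minimal_open_pair_def by auto
    then show "line_below (circle_pos_low (snd p)) (circle_pos_low (snd q)) \<and>
        line_below (circle_pos (fst p)) (circle_pos (fst q))"
      by (simp add: circle_pos_mono circle_pos_low_mono)
  qed
  show "\<And>p. p \<in> lower_region \<Longrightarrow>
      line_to_circle (line_clamp (circle_pos_low (snd p)) (circle_pos (fst p)) (walk (1 - 0))) = fst p \<and>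
      line_to_circle (line_clamp (circle_pos_low (snd p)) (circle_pos (fst p)) (walk (1 - 1))) = snd p"
    unfolding lower_region_def minimal_open_pair_def
    by (auto simp: line_clamp_def circle_pos_def circle_pos_low_def line_to_circle_def)
qed (rule walk_reversed_locally_below)

definition stop_path :: "S13 \<Rightarrow> S13 \<Rightarrow> S13 \<Rightarrow> real \<Rightarrow> S13" where
  "stop_path a c b t = (if t < 1/2 then a else if t = 1/2 then c else b)"

lemma continuous_map_stop_path:
  assumes "a \<in> minimal_open c" "b \<in> minimal_open c"
  shows "continuous_map unit_interval S1_3 (stop_path a c b)"
  unfolding continuous_map_into_S1_3_iff
proof
  fix t :: real
  consider "t < 1/2" | "t = 1/2" | "t > 1/2" by linarith
  then show "\<exists>e>0. \<forall>u\<in>{0..1}. \<bar>u - t\<bar> < e \<longrightarrow>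
      stop_path a c b u \<in> minimal_open (stop_path a c b t)"
  proof cases
    case 1 then show ?thesis by (intro exI[of _ "1/2 - t"]) (auto simp: stop_path_def)
  next
    case 2 then show ?thesis using assms by (intro exI[of _ 1]) (auto simp: stop_path_def)
  next
    case 3 then show ?thesis by (intro exI[of _ "t - 1/2"]) (auto simp: stop_path_def)
  qed
qed

definition diagonal_join :: "S13 \<Rightarrow> S13 \<Rightarrow> S13" where
  "diagonal_join a b =
     (if a \<in> minimal_open b then b else if b \<in> minimal_open a then a
      else if a \<in> minimal_open y0 \<and> b \<in> minimal_open y0 then y0
      else if a \<in> minimal_open y1 \<and> b \<in> minimal_open y1 then y1 else y2)"

lemma diagonal_join_least:
  "a \<in> minimal_open c \<Longrightarrow> b \<in> minimal_open c \<Longrightarrow> diagonal_join a b \<in> minimal_open c"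
  by (cases a; cases b; cases c) (auto simp: diagonal_join_def)

lemma diagonal_join_upper:
  "(a, b) \<in> diagonal_region \<Longrightarrow> a \<in> minimal_open (diagonal_join a b) \<and> b \<in> minimal_open (diagonal_join a b)"
  unfolding diagonal_region_def minimal_open_pair_def by (cases a; cases b) (auto simp: diagonal_join_def)

lemma has_motion_planner_diagonal_region: "has_motion_planner S1_3 diagonal_region"
proof (rule has_motion_planner_S1_3I[OF openin_regions(1), where
      P = "\<lambda>p. stop_path (fst p) (diagonal_join (fst p) (snd p)) (snd p)"])
  show "continuous_map unit_interval S1_3 (stop_path (fst p) (diagonal_join (fst p) (snd p)) (snd p))"
    if "p \<in> diagonal_region" for p
    using that diagonal_join_upper[of "fst p" "snd p"] by (simp add: continuous_map_stop_path)
  show "stop_path (fst p) (diagonal_join (fst p) (snd p)) (snd p) t \<in>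
      minimal_open (stop_path (fst q) (diagonal_join (fst q) (snd q)) (snd q) t)"
    if "q \<in> diagonal_region" "p \<in> minimal_open_pair q" for p q t
  proof -
    have below: "fst p \<in> minimal_open (fst q)" "snd p \<in> minimal_open (snd q)"
      using that(2) by (auto simp: minimal_open_pair_def)
    moreover have "diagonal_join (fst p) (snd p) \<in> minimal_open (diagonal_join (fst q) (snd q))"
      using below diagonal_join_upper[of "fst q" "snd q"] that(1)
      by (auto intro: diagonal_join_least minimal_open_trans)
    ultimately show ?thesis
      by (simp add: stop_path_def)
  qed
qed (simp add: stop_path_def)

lemma diagonal_upper_lower_cover: "diagonal_region \<union> upper_region \<union> lower_region = UNIV"
proof -
  have "(a, b) \<in> diagonal_region \<union> upper_region \<union> lower_region" for a b
    unfolding diagonal_region_def upper_region_def lower_region_def minimal_open_pair_def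
    by (cases a; cases b) auto
  then show ?thesis by auto
qed

section \<open>Winding numbers and the lower bound\<close>

text \<open>The signed displacement around the hexagon, normalised to \<open>-3 \<le> r \<le> 2\<close>. It is additive
  on each minimal open set, whose points are at most two steps apart.\<close>

definition circle_step :: "S13 \<Rightarrow> S13 \<Rightarrow> int" where
  "circle_step a b = (let r = (circle_pos b - circle_pos a) mod 6 in if r \<le> 2 then r else r - 6)"

lemma circle_step_trans:
  "a \<in> minimal_open e \<Longrightarrow> b \<in> minimal_open e \<Longrightarrow> c \<in> minimal_open e \<Longrightarrow>
     circle_step a b + circle_step b c = circle_step a c"
  by (cases e; cases a; cases b; cases c) (auto simp: circle_step_def circle_pos_def)

lemma circle_step_square:
  assumes "c \<in> minimal_open e" "d \<in> minimal_open e" "a \<in> minimal_open c" "b \<in> minimal_open d"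
  shows "circle_step a b + circle_step b d = circle_step a c + circle_step c d"
proof -
  have "a \<in> minimal_open e" "b \<in> minimal_open e"
    using assms minimal_open_trans by blast+
  then show ?thesis
    using circle_step_trans[of a e b d] circle_step_trans[of a e c d] assms(1,2) by simp
qed

definition winding :: "(nat \<Rightarrow> S13) \<Rightarrow> nat \<Rightarrow> int" where
  "winding g N = (\<Sum>k<N. circle_step (g k) (g (Suc k)))"

lemma winding_difference:
  assumes "\<forall>k\<le>N. g k \<in> minimal_open (h k)"
    and "\<forall>k<N. \<exists>c. h k \<in> minimal_open c \<and> h (Suc k) \<in> minimal_open c"
  shows "winding h N - winding g N = circle_step (g N) (h N) - circle_step (g 0) (h 0)"
  using assms
proof (induction N)
  case (Suc N)
  obtain c where "h N \<in> minimal_open c" "h (Suc N) \<in> minimal_open c"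
    using Suc.prems(2) by blast
  then have "circle_step (g N) (g (Suc N)) + circle_step (g (Suc N)) (h (Suc N)) =
      circle_step (g N) (h N) + circle_step (h N) (h (Suc N))"
    using circle_step_square Suc.prems(1) by simp
  then show ?case
    using Suc by (simp add: winding_def)
qed (simp add: winding_def)

lemma continuous_map_S1_3_eventually_fine_samples:
  assumes \<gamma>: "continuous_map unit_interval S1_3 \<gamma>"
  shows "\<forall>\<^sub>F N in sequentially. \<forall>k<N. \<exists>c.
           \<gamma> (real k / real N) \<in> minimal_open c \<and> \<gamma> (real (Suc k) / real N) \<in> minimal_open c"
proof -
  define B where "B c = (SOME B. open B \<and> {t \<in> {0..1}. \<gamma> t \<in> minimal_open c} = {0..1} \<inter> B)"
    for c
  have B: "open (B c) \<and> {t \<in> {0..1}. \<gamma> t \<in> minimal_open c} = {0..1} \<inter> B c" for c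
  proof -
    have "openin unit_interval {t \<in> topspace unit_interval. \<gamma> t \<in> minimal_open c}"
      using \<gamma> openin_minimal_open unfolding continuous_map_def by blast
    then have "\<exists>B. open B \<and> {t \<in> {0..1}. \<gamma> t \<in> minimal_open c} = {0..1} \<inter> B"
      unfolding openin_open by simp
    then show ?thesis
      unfolding B_def by (rule someI_ex)
  qed
  have "{0..1::real} \<subseteq> \<Union>(range B)"
  proof
    fix t :: real assume "t \<in> {0..1}"
    then have "t \<in> {s \<in> {0..1}. \<gamma> s \<in> minimal_open (\<gamma> t)}"
      by simp
    then have "t \<in> B (\<gamma> t)"
      unfolding conjunct2[OF B[of "\<gamma> t"]] by blast
    then show "t \<in> \<Union>(range B)"
      by blast
  qed
  then obtain d where "0 < d" and d: "\<And>T. \<lbrakk>T \<subseteq> {0..1}; diameter T < d\<rbrakk> \<Longrightarrow> \<exists>U\<in>range B. T \<subseteq> U"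
    using Lebesgue_number_lemma[of "{0..1::real}" "range B"] B by blast
  have "\<forall>\<^sub>F N in sequentially. 1 / real N < d"
    using order_tendstoD(2)[OF lim_1_over_n \<open>0 < d\<close>] .
  then show ?thesis
  proof (rule eventually_mono, intro allI impI)
    fix N k :: nat assume N: "1 / real N < d" and "k < N"
    let ?T = "{real k / real N .. real (Suc k) / real N}"
    have le: "real k / real N \<le> real (Suc k) / real N"
      by (simp add: divide_right_mono)
    have "real (Suc k) / real N \<le> 1"
      using \<open>k < N\<close> by simp
    then have sub: "?T \<subseteq> {0..1}"
      by auto
    have "real (Suc k) / real N - real k / real N = 1 / real N"
      by (simp add: diff_divide_distrib[symmetric])
    then have "diameter ?T < d"
      using le N by simp
    then obtain c where "?T \<subseteq> B c"
      using d sub by blast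
    then have "real k / real N \<in> {0..1} \<inter> B c" "real (Suc k) / real N \<in> {0..1} \<inter> B c"
      using sub le by auto
    then show "\<exists>c. \<gamma> (real k / real N) \<in> minimal_open c \<and> \<gamma> (real (Suc k) / real N) \<in> minimal_open c"
      using B[of c] by blast
  qed
qed

definition endpoint_step :: "S13 \<times> S13 \<Rightarrow> S13 \<times> S13 \<Rightarrow> int" where
  "endpoint_step p q = circle_step (snd p) (snd q) - circle_step (fst p) (fst q)"

lemma motion_planner_S1_3_winding:
  assumes "has_motion_planner S1_3 V"
  obtains W where "\<And>p q. \<lbrakk>p \<in> V; q \<in> V; p \<in> minimal_open_pair q\<rbrakk> \<Longrightarrow> W q - W p = endpoint_step p q"
proof -
  obtain s where s: "continuous_map (subtopology (prod_topology S1_3 S1_3) V) (path_space S1_3) s"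
    and ends: "\<And>p. p \<in> V \<Longrightarrow> s p 0 = fst p \<and> s p 1 = snd p"
    using assms unfolding has_motion_planner_def by blast
  have "continuous_map unit_interval S1_3 (s p)" if "p \<in> V" for p
    using s that unfolding continuous_map_def topspace_path_space by auto
  then have "\<forall>p\<in>V. \<forall>\<^sub>F N in sequentially. \<forall>k<N. \<exists>c.
      s p (real k / real N) \<in> minimal_open c \<and> s p (real (Suc k) / real N) \<in> minimal_open c"
    using continuous_map_S1_3_eventually_fine_samples by blast
  then have "\<forall>\<^sub>F N in sequentially. 0 < N \<and> (\<forall>p\<in>V. \<forall>k<N. \<exists>c.
      s p (real k / real N) \<in> minimal_open c \<and> s p (real (Suc k) / real N) \<in> minimal_open c)"
    by (intro eventually_conj eventually_gt_at_top eventually_ball_finite) auto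
  then obtain N where "0 < N" and fine: "\<forall>p\<in>V. \<forall>k<N. \<exists>c.
      s p (real k / real N) \<in> minimal_open c \<and> s p (real (Suc k) / real N) \<in> minimal_open c"
    using eventually_happens'[OF sequentially_bot] by blast
  show thesis
  proof (rule that[of "\<lambda>p. winding (\<lambda>k. s p (real k / real N)) N"])
    fix p q assume "p \<in> V" "q \<in> V" "p \<in> minimal_open_pair q"
    have "real k / real N \<in> {0..1}" if "k \<le> N" for k
      using that \<open>0 < N\<close> by auto
    then have "\<forall>k\<le>N. s p (real k / real N) \<in> minimal_open (s q (real k / real N))"
      using motion_planner_S1_3_monotone[OF s \<open>p \<in> V\<close> \<open>q \<in> V\<close> \<open>p \<in> minimal_open_pair q\<close>]
      by blast
    from winding_difference[OF this] fine \<open>q \<in> V\<close>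
    show "winding (\<lambda>k. s q (real k / real N)) N - winding (\<lambda>k. s p (real k / real N)) N =
        endpoint_step p q"
      using ends \<open>p \<in> V\<close> \<open>q \<in> V\<close> \<open>0 < N\<close> by (simp add: endpoint_step_def)
  qed
qed

text \<open>The common lower bound of two maximal points; the last equation only fills in junk.\<close>

fun circle_meet :: "S13 \<Rightarrow> S13 \<Rightarrow> S13" where
  "circle_meet y0 y1 = x0"
| "circle_meet y1 y0 = x0"
| "circle_meet y1 y2 = x1"
| "circle_meet y2 y1 = x1"
| "circle_meet y2 y0 = x2"
| "circle_meet y0 y2 = x2"
| "circle_meet a b = a"

text \<open>The increment of the winding number between two maximal pairs, measured through their
  common lower bound.\<close>

definition maximal_step :: "S13 \<times> S13 \<Rightarrow> S13 \<times> S13 \<Rightarrow> int" where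
  "maximal_step m m' =
     (let l = (circle_meet (fst m) (fst m'), circle_meet (snd m) (snd m'))
      in endpoint_step l m' - endpoint_step l m)"

definition maximal_points :: "S13 set" where
  "maximal_points = {y0, y1, y2}"

lemma circle_meet_below:
  "a \<in> maximal_points \<Longrightarrow> b \<in> maximal_points \<Longrightarrow>
     circle_meet a b \<in> minimal_open a \<and> circle_meet a b \<in> minimal_open b"
  by (auto simp: maximal_points_def)

lemma motion_planner_S1_3_maximal_step:
  assumes "openin (prod_topology S1_3 S1_3) V" "has_motion_planner S1_3 V"
  obtains W where "\<And>m m'. \<lbrakk>m \<in> V; m' \<in> V; m \<in> maximal_points \<times> maximal_points;
                           m' \<in> maximal_points \<times> maximal_points\<rbrakk> \<Longrightarrow> W m' - W m = maximal_step m m'"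
proof -
  obtain W where W: "\<And>p q. \<lbrakk>p \<in> V; q \<in> V; p \<in> minimal_open_pair q\<rbrakk> \<Longrightarrow> W q - W p = endpoint_step p q"
    using motion_planner_S1_3_winding[OF assms(2)] by blast
  show thesis
  proof (rule that[of W])
    fix m m' assume "m \<in> V" "m' \<in> V"
      and max: "m \<in> maximal_points \<times> maximal_points" "m' \<in> maximal_points \<times> maximal_points"
    define l where "l = (circle_meet (fst m) (fst m'), circle_meet (snd m) (snd m'))"
    have "fst m \<in> maximal_points" "snd m \<in> maximal_points"
        "fst m' \<in> maximal_points" "snd m' \<in> maximal_points"
      using max unfolding mem_Times_iff by blast+
    then have below: "l \<in> minimal_open_pair m" "l \<in> minimal_open_pair m'"
      unfolding l_def minimal_open_pair_def by (simp_all add: circle_meet_below)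
    moreover have "l \<in> V"
      using assms(1) \<open>m \<in> V\<close> below(1) unfolding openin_prod_S1_3 by blast
    ultimately have "W m - W l = endpoint_step l m" "W m' - W l = endpoint_step l m'"
      using W \<open>m \<in> V\<close> \<open>m' \<in> V\<close> by blast+
    moreover have "maximal_step m m' = endpoint_step l m' - endpoint_step l m"
      unfolding maximal_step_def l_def Let_def ..
    ultimately show "W m' - W m = maximal_step m m'"
      by linarith
  qed
qed

lemma motion_planner_S1_3_triangle:
  assumes "openin (prod_topology S1_3 S1_3) V" "has_motion_planner S1_3 V"
    and "m1 \<in> maximal_points \<times> maximal_points" "m2 \<in> maximal_points \<times> maximal_points"
      "m3 \<in> maximal_points \<times> maximal_points"
    and "maximal_step m1 m2 + maximal_step m2 m3 + maximal_step m3 m1 \<noteq> 0"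
  shows "\<not> (m1 \<in> V \<and> m2 \<in> V \<and> m3 \<in> V)"
proof
  assume "m1 \<in> V \<and> m2 \<in> V \<and> m3 \<in> V"
  then have V: "m1 \<in> V" "m2 \<in> V" "m3 \<in> V"
    by auto
  obtain W where W: "\<And>m m'. \<lbrakk>m \<in> V; m' \<in> V; m \<in> maximal_points \<times> maximal_points;
      m' \<in> maximal_points \<times> maximal_points\<rbrakk> \<Longrightarrow> W m' - W m = maximal_step m m'"
    using motion_planner_S1_3_maximal_step[OF assms(1,2)] by blast
  have "maximal_step m1 m2 + maximal_step m2 m3 + maximal_step m3 m1 =
      (W m2 - W m1) + (W m3 - W m2) + (W m1 - W m3)"
    using W[OF V(1,2) assms(3,4)] W[OF V(2,3) assms(4,5)] W[OF V(3,1) assms(5,3)] by simp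
  then show False
    using assms(6) by simp
qed

lemma motion_planner_S1_3_triangles:
  assumes "openin (prod_topology S1_3 S1_3) V" "has_motion_planner S1_3 V"
  shows "\<not> ((y0, y0) \<in> V \<and> (y0, y1) \<in> V \<and> (y0, y2) \<in> V)"
    "\<not> ((y0, y0) \<in> V \<and> (y1, y0) \<in> V \<and> (y2, y0) \<in> V)"
    "\<not> ((y0, y1) \<in> V \<and> (y1, y0) \<in> V \<and> (y1, y2) \<in> V)"
    "\<not> ((y0, y0) \<in> V \<and> (y1, y1) \<in> V \<and> (y1, y2) \<in> V)"
    "\<not> ((y0, y1) \<in> V \<and> (y1, y1) \<in> V \<and> (y2, y0) \<in> V)"
    "\<not> ((y0, y2) \<in> V \<and> (y1, y0) \<in> V \<and> (y1, y1) \<in> V)"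
    "\<not> ((y0, y2) \<in> V \<and> (y1, y2) \<in> V \<and> (y2, y0) \<in> V)"
  by (rule motion_planner_S1_3_triangle[OF assms];
      simp add: maximal_points_def maximal_step_def endpoint_step_def circle_step_def circle_pos_def)+

lemma no_two_motion_planners_cover:
  assumes "openin (prod_topology S1_3 S1_3) V1" "has_motion_planner S1_3 V1"
    and "openin (prod_topology S1_3 S1_3) V2" "has_motion_planner S1_3 V2"
  shows "V1 \<union> V2 \<noteq> UNIV"
proof
  assume "V1 \<union> V2 = UNIV"
  then have "\<And>p. p \<in> V1 \<or> p \<in> V2"
    by blast
  note cover = this[of "(y0, y0)"] this[of "(y0, y1)"] this[of "(y0, y2)"] this[of "(y1, y0)"]
    this[of "(y1, y1)"] this[of "(y1, y2)"] this[of "(y2, y0)"] this[of "(y2, y1)"] this[of "(y2, y2)"]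
  show False
    using motion_planner_S1_3_triangles[OF assms(1,2)] motion_planner_S1_3_triangles[OF assms(3,4)] cover
    by sat
qed

definition motion_planner_cover :: "'a topology \<Rightarrow> nat \<Rightarrow> bool" where
  "motion_planner_cover X k \<longleftrightarrow>
     (\<exists>U :: nat \<Rightarrow> ('a \<times> 'a) set.
        (\<forall>i<k. openin (prod_topology X X) (U i) \<and> has_motion_planner X (U i)) \<and>
        (\<Union>i<k. U i) = topspace (prod_topology X X))"

lemma TC_eqI:
  assumes "motion_planner_cover X k" and "\<And>j. j < k \<Longrightarrow> \<not> motion_planner_cover X j"
  shows "TC X = k"
  unfolding TC_def motion_planner_cover_def[symmetric]
  using assms by (metis Least_equality not_le)

lemma motion_planner_cover_S1_3: "motion_planner_cover S1_3 3"
proof -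
  have "{..<3::nat} = {0, 1, 2}"
    by auto
  then show ?thesis
    unfolding motion_planner_cover_def
    using openin_regions has_motion_planner_diagonal_region has_motion_planner_upper_region
      has_motion_planner_lower_region diagonal_upper_lower_cover
    by (intro exI[of _ "\<lambda>i. if i = 0 then diagonal_region else if i = 1 then upper_region
                           else lower_region"]) auto
qed

lemma not_motion_planner_cover_S1_3:
  assumes "k < 3"
  shows "\<not> motion_planner_cover S1_3 k"
proof
  assume "motion_planner_cover S1_3 k"
  then obtain U where U: "\<forall>i<k. openin (prod_topology S1_3 S1_3) (U i) \<and> has_motion_planner S1_3 (U i)"
    and cover: "(\<Union>i<k. U i) = UNIV"
    unfolding motion_planner_cover_def by auto
  then have "0 < k"
    by (metis UNIV_I UN_E lessThan_iff not_gr0 not_less0)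
  moreover have "{..<k} \<subseteq> {0, k - 1}"
    using \<open>k < 3\<close> by auto
  ultimately have "U 0 \<union> U (k - 1) = UNIV"
    using cover by blast
  then show False
    using no_two_motion_planners_cover U \<open>0 < k\<close> by simp
qed

theorem corollary6:
  shows "TC S1_3 = 3"
  using TC_eqI motion_planner_cover_S1_3 not_motion_planner_cover_S1_3 by blast

end
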